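(* Let $[i_s,i_t]\in\mathcal P$ be a bin of the key partition on which the offline optimal sequence $u_{i_s},\dots,u_{i_t}$ is monotonic (non-decreasing or non-increasing). Then the predictions $x_t$ of FLH-OGD satisfy $$\sum_{t=i_s}^{i_t}(y_t-x_t)^2-(y_t-u_t)^2\le 31(B+G)^2\log n.$$
   Context: Squared loss game: $n\ge 3$, $B\ge 1$, $G\ge B$; for $t=1,\dots,n$ the learner predicts $x_t\in[-B,B]$, then the adversary reveals $y_t\in[-G,G]$. $[a,b]=\{a,\dots,b\}$. FLH-OGD: For each $j\in[n]$ a base learner $E^j$ is started at time $j$; it runs projected online gradient descent on $[-B,B]$ on the losses $x\mapsto (y_t-x)^2$, $t\ge j$: its first prediction $x^{(j)}_j$ is a fixed point of $[-B,B]$, and $x^{(j)}_{t+1}=\Pi\big(x^{(j)}_t-\tfrac{1}{2\tau}\cdot 2(x^{(j)}_t-y_t)\big)$ with $\tau=t-j+1$, $\Pi$ the projection onto $[-B,B]$. The FLH meta-algorithm with learning rate $\zeta$ keeps a probability vector $v_t=(v_t^{(1)},\dots,v_t^{(t)})$, $v_1=(1)$; it predicts $x_t=\sum_{j\le t}v_t^{(j)}x^{(j)}_t$; after $y_t$ is revealed it sets $\hat v^{(i)}_{t+1}=v_t^{(i)}e^{-\zeta(y_t-x_t^{(i)})^2}/\sum_{j\le t}v_t^{(j)}e^{-\zeta(y_t-x_t^{(j)})^2}$ for $i\le t$, then $v^{(t+1)}_{t+1}=1/(t+1)$ and $v^{(i)}_{t+1}=(1-\tfrac1{t+1})\hat v^{(i)}_{t+1}$.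 FLH-OGD uses $\zeta=1/(2(G+B)^2)$. Offline optimal: given $C_n>0$, $u_1,\dots,u_n$ is an optimal solution of: minimize $\frac12\sum_{t=1}^n(y_t-\tilde u_t)^2$ subject to $\sum_{t=2}^{n}|\tilde u_t-\tilde u_{t-1}|\le C_n$ and $-B\le\tilde u_t\le B$; with optimal dual variables $\lambda\ge0$ (TV constraint) and $\gamma^\pm_t\ge0$ (box constraints) satisfying the KKT conditions: there are $s_t\in[-1,1]$ with $s_t=\mathrm{sign}(u_{t+1}-u_t)$ whenever $u_{t+1}\ne u_t$, $s_0=s_n=0$, $u_t-y_t=\lambda(s_t-s_{t-1})+\gamma_t^--\gamma_t^+$, and complementary slackness $\lambda(\sum_{t=2}^n|u_t-u_{t-1}|-C_n)=0$, $\gamma_t^-(u_t+B)=0$, $\gamma_t^+(u_t-B)=0$. Key partition $\mathcal P$: $[n]$ is partitioned greedily into consecutive bins: the first bin starts at $i_s=1$; a bin starting at $i_s$ ends at the largest $i_t\in[i_s,n]$ such that $\sum_{j=i_s+1}^{i_t}|u_j-u_{j-1}|\le B/\sqrt{i_t-i_s+1}$; the next bin starts at $i_t+1$, until $n$ is covered. *)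

theory Defs
  imports Complex_Main
begin

definition proj_box :: "real \<Rightarrow> real \<Rightarrow> real" where
  "proj_box B x = max (- B) (min B x)"

text \<open>Base learner E^j (projected OGD started at time j with first prediction x0).
  ogd_step B x0 y j k is the prediction of E^j at time t = j + k.\<close>
fun ogd_step :: "real \<Rightarrow> real \<Rightarrow> (nat \<Rightarrow> real) \<Rightarrow> nat \<Rightarrow> nat \<Rightarrow> real" where
  "ogd_step B x0 y j 0 = x0"
| "ogd_step B x0 y j (Suc k) =
     (let x = ogd_step B x0 y j k; \<tau> = real (Suc k)
      in proj_box B (x - (1 / (2 * \<tau>)) * (2 * (x - y (j + k)))))"

text \<open>Prediction x_t^{(j)} of base learner E^j at time t (meaningful for t \<ge> j).\<close>
definition base_pred :: "real \<Rightarrow> real \<Rightarrow> (nat \<Rightarrow> real) \<Rightarrow> nat \<Rightarrow> nat \<Rightarrow> real" where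
  "base_pred B x0 y j t = ogd_step B x0 y j (t - j)"

text \<open>FLH weights v_t^{(i)}, i = 1..t (zero outside), for base predictions E j t.\<close>
fun flh_w :: "real \<Rightarrow> (nat \<Rightarrow> nat \<Rightarrow> real) \<Rightarrow> (nat \<Rightarrow> real) \<Rightarrow> nat \<Rightarrow> nat \<Rightarrow> real" where
  "flh_w \<zeta> E y 0 = (\<lambda>i. 0)"
| "flh_w \<zeta> E y (Suc 0) = (\<lambda>i. if i = 1 then 1 else 0)"
| "flh_w \<zeta> E y (Suc (Suc t)) =
     (let v = flh_w \<zeta> E y (Suc t);
          Z = (\<Sum>j = 1..Suc t. v j * exp (- \<zeta> * (y (Suc t) - E j (Suc t))\<^sup>2))
      in (\<lambda>i. if i = Suc (Suc t) then 1 / real (Suc (Suc t))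
              else if 1 \<le> i \<and> i \<le> Suc t
                then (1 - 1 / real (Suc (Suc t))) * (v i * exp (- \<zeta> * (y (Suc t) - E i (Suc t))\<^sup>2) / Z)
              else 0))"

definition flh_pred :: "real \<Rightarrow> (nat \<Rightarrow> nat \<Rightarrow> real) \<Rightarrow> (nat \<Rightarrow> real) \<Rightarrow> nat \<Rightarrow> real" where
  "flh_pred \<zeta> E y t = (\<Sum>j = 1..t. flh_w \<zeta> E y t j * E j t)"

definition flh_ogd_pred :: "real \<Rightarrow> real \<Rightarrow> real \<Rightarrow> (nat \<Rightarrow> real) \<Rightarrow> nat \<Rightarrow> real" where
  "flh_ogd_pred B G x0 y t = flh_pred (1 / (2 * (G + B)\<^sup>2)) (base_pred B x0 y) y t"

definition tv :: "(nat \<Rightarrow> real) \<Rightarrow> nat \<Rightarrow> nat \<Rightarrow> real" where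
  "tv u a b = (\<Sum>j = Suc a..b. \<bar>u j - u (j - 1)\<bar>)"

definition offline_feasible :: "nat \<Rightarrow> real \<Rightarrow> real \<Rightarrow> (nat \<Rightarrow> real) \<Rightarrow> bool" where
  "offline_feasible n B Cn w \<longleftrightarrow> tv w 1 n \<le> Cn \<and> (\<forall>t\<in>{1..n}. - B \<le> w t \<and> w t \<le> B)"

definition offline_obj :: "nat \<Rightarrow> (nat \<Rightarrow> real) \<Rightarrow> (nat \<Rightarrow> real) \<Rightarrow> real" where
  "offline_obj n y w = (1/2) * (\<Sum>t = 1..n. (y t - w t)\<^sup>2)"

definition offline_optimal :: "nat \<Rightarrow> real \<Rightarrow> real \<Rightarrow> (nat \<Rightarrow> real) \<Rightarrow> (nat \<Rightarrow> real) \<Rightarrow> bool" where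
  "offline_optimal n B Cn y u \<longleftrightarrow> offline_feasible n B Cn u \<and>
     (\<forall>w. offline_feasible n B Cn w \<longrightarrow> offline_obj n y u \<le> offline_obj n y w)"

text \<open>KKT conditions with dual variables \<lambda>, \<gamma>^-, \<gamma>^+ and subgradient signs s.\<close>
definition kkt_holds :: "nat \<Rightarrow> real \<Rightarrow> real \<Rightarrow> (nat \<Rightarrow> real) \<Rightarrow> (nat \<Rightarrow> real) \<Rightarrow> bool" where
  "kkt_holds n B Cn y u \<longleftrightarrow>
    (\<exists>(lam::real) (gm::nat \<Rightarrow> real) (gp::nat \<Rightarrow> real) (s::nat \<Rightarrow> real).
       lam \<ge> 0 \<and> (\<forall>t\<in>{1..n}. gm t \<ge> 0 \<and> gp t \<ge> 0) \<and>
       (\<forall>t\<in>{0..n}. - 1 \<le> s t \<and> s t \<le> 1) \<and> s 0 = 0 \<and> s n = 0 \<and>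
       (\<forall>t\<in>{1..<n}. u (t + 1) \<noteq> u t \<longrightarrow> s t = sgn (u (t + 1) - u t)) \<and>
       (\<forall>t\<in>{1..n}. u t - y t = lam * (s t - s (t - 1)) + gm t - gp t) \<and>
       lam * (tv u 1 n - Cn) = 0 \<and>
       (\<forall>t\<in>{1..n}. gm t * (u t + B) = 0 \<and> gp t * (u t - B) = 0))"

definition bin_end :: "nat \<Rightarrow> real \<Rightarrow> (nat \<Rightarrow> real) \<Rightarrow> nat \<Rightarrow> nat" where
  "bin_end n B u a = (GREATEST b. a \<le> b \<and> b \<le> n \<and> tv u a b \<le> B / sqrt (real (b - a + 1)))"

fun bin_start :: "nat \<Rightarrow> real \<Rightarrow> (nat \<Rightarrow> real) \<Rightarrow> nat \<Rightarrow> nat" where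
  "bin_start n B u 0 = 1"
| "bin_start n B u (Suc k) = bin_end n B u (bin_start n B u k) + 1"

definition key_partition :: "nat \<Rightarrow> real \<Rightarrow> (nat \<Rightarrow> real) \<Rightarrow> (nat \<times> nat) set" where
  "key_partition n B u =
     {(a, b). \<exists>k. a = bin_start n B u k \<and> a \<le> n \<and> b = bin_end n B u a}"

definition monotone_on_bin :: "(nat \<Rightarrow> real) \<Rightarrow> nat \<Rightarrow> nat \<Rightarrow> bool" where
  "monotone_on_bin u a b \<longleftrightarrow>
     (\<forall>t\<in>{a..<b}. u t \<le> u (t + 1)) \<or> (\<forall>t\<in>{a..<b}. u (t + 1) \<le> u t)"

end

theory Submission
  imports Defs "HOL-Analysis.Harmonic_Numbers"
begin

text \<open>Split the bin at the first and last time \<open>t\<^sub>1\<close>, \<open>t\<^sub>2\<close> at which \<open>u\<close> moves. Against a constant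
  comparator, FLH-OGD has regret at most \<open>6 (B + G)\<^sup>2 log n\<close> on every interval: the exp-concave FLH
  mixture loses at most \<open>log (t + 1) / \<zeta>\<close> to the base learner started at the left end, and that
  learner, online gradient descent with step \<open>1/(2\<tau>)\<close> on a strongly convex loss, has logarithmic
  regret. This handles the two outer pieces, where \<open>u\<close> is constant. On the middle piece we compare
  with the constant \<open>u (t\<^sub>1 + 1)\<close>: by monotonicity \<open>u\<close> stays strictly inside the box there, so the
  KKT conditions reduce to \<open>u t - y t = \<lambda> (s t - s (t - 1))\<close> with a sign \<open>s\<close> that is constant at
  every move of \<open>u\<close>, and summation by parts shows that passing from the constant to \<open>u\<close> costs
  exactly \<open>\<Sum> (u t - u (t\<^sub>1 + 1))\<^sup>2\<close>. The total-variation budget \<open>B / sqrt (length)\<close> of a bin bounds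
  this by \<open>B\<^sup>2\<close>, and \<open>3 \<cdot> 6 (B + G)\<^sup>2 log n + B\<^sup>2 \<le> 31 (B + G)\<^sup>2 log n\<close>.\<close>

lemma convex_on_neg_exp_neg_sq:
  fixes z y :: real and S :: "real set"
  assumes "convex S" and z: "0 < z" and small: "\<And>x. x \<in> S \<Longrightarrow> 2 * z * (y - x)\<^sup>2 \<le> 1"
  shows "convex_on S (\<lambda>x. - exp (- z * (y - x)\<^sup>2))"
proof (rule f''_ge0_imp_convex[OF \<open>convex S\<close>])
  show "((\<lambda>x. - exp (- z * (y - x)\<^sup>2)) has_real_derivative
          - exp (- z * (y - x)\<^sup>2) * (2 * z * (y - x))) (at x)" for x
    by (rule derivative_eq_intros refl | simp)+ (simp add: algebra_simps)
  show "((\<lambda>x. - exp (- z * (y - x)\<^sup>2) * (2 * z * (y - x))) has_real_derivative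
          2 * z * exp (- z * (y - x)\<^sup>2) * (1 - 2 * z * (y - x)\<^sup>2)) (at x)" for x
    by (rule derivative_eq_intros refl | simp)+ (simp add: algebra_simps power2_eq_square)
  show "0 \<le> 2 * z * exp (- z * (y - x)\<^sup>2) * (1 - 2 * z * (y - x)\<^sup>2)" if "x \<in> S" for x
    using small[OF that] z by simp
qed

lemma sum_exp_neg_sq_le:
  fixes z y :: real and S :: "real set" and I :: "'i set" and a e :: "'i \<Rightarrow> real"
  assumes "convex S" "0 < z" "\<And>x. x \<in> S \<Longrightarrow> 2 * z * (y - x)\<^sup>2 \<le> 1"
    and "finite I" "I \<noteq> {}" "sum a I = 1" "\<And>i. i \<in> I \<Longrightarrow> 0 \<le> a i"
    and "\<And>i. i \<in> I \<Longrightarrow> e i \<in> S"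
  shows "(\<Sum>i\<in>I. a i * exp (- z * (y - e i)\<^sup>2)) \<le> exp (- z * (y - (\<Sum>i\<in>I. a i * e i))\<^sup>2)"
  using convex_on_sum[OF assms(4,5) convex_on_neg_exp_neg_sq[OF assms(1-3)] assms(6-8)]
  by (simp add: sum_negf)

lemma flh_w_new_expert: "flh_w \<zeta> E y (Suc (Suc t)) (Suc (Suc t)) = 1 / real (Suc (Suc t))"
  by (simp add: Let_def)

lemma flh_w_update:
  assumes "1 \<le> i" "i \<le> Suc t"
  shows "flh_w \<zeta> E y (Suc (Suc t)) i =
    (1 - 1 / real (Suc (Suc t))) * (flh_w \<zeta> E y (Suc t) i * exp (- \<zeta> * (y (Suc t) - E i (Suc t))\<^sup>2) /
      (\<Sum>j = 1..Suc t. flh_w \<zeta> E y (Suc t) j * exp (- \<zeta> * (y (Suc t) - E j (Suc t))\<^sup>2)))"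
  using assms by (simp add: Let_def)

declare flh_w.simps(3) [simp del]

lemma flh_w_diag:
  assumes "1 \<le> t"
  shows "flh_w \<zeta> E y t t * real t = 1"
proof -
  obtain k where t: "t = Suc k" using assms by (cases t) auto
  show ?thesis unfolding t by (cases k) (simp_all add: flh_w_new_expert)
qed

lemma flh_w_distribution:
  assumes "1 \<le> t"
  shows "(\<forall>i\<in>{1..t}. 0 < flh_w \<zeta> E y t i) \<and> sum (flh_w \<zeta> E y t) {1..t} = 1"
  using assms
proof (induction t rule: nat_induct_at_least)
  case base
  then show ?case by simp
next
  case (Suc m)
  then obtain t where m: "m = Suc t" by (cases m) auto
  define v where "v = flh_w \<zeta> E y (Suc t)"
  define e where "e j = exp (- \<zeta> * (y (Suc t) - E j (Suc t))\<^sup>2)" for j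
  define Z where "Z = (\<Sum>j = 1..Suc t. v j * e j)"
  define w where "w = flh_w \<zeta> E y (Suc (Suc t))"
  have v_pos: "\<forall>i\<in>{1..Suc t}. 0 < v i" using Suc.IH m v_def by auto
  have Z_pos: "0 < Z"
    unfolding Z_def by (rule sum_pos) (use v_pos e_def in auto)
  have w_old: "w i = (1 - 1 / real (Suc (Suc t))) * (v i * e i / Z)" if "i \<in> {1..Suc t}" for i
    using flh_w_update[of i t \<zeta> E y] that unfolding w_def v_def e_def Z_def by auto
  have "0 < w i" if "i \<in> {1..Suc (Suc t)}" for i
  proof (cases "i = Suc (Suc t)")
    case True
    then show ?thesis by (simp add: w_def flh_w_new_expert)
  next
    case False
    with that have "i \<in> {1..Suc t}" by auto
    with w_old v_pos Z_pos show ?thesis by (simp add: e_def)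
  qed
  moreover have "sum w {1..Suc (Suc t)} = 1"
  proof -
    have "sum w {1..Suc t} = (\<Sum>i = 1..Suc t. (1 - 1 / real (Suc (Suc t))) * (v i * e i / Z))"
      by (rule sum.cong) (simp_all add: w_old)
    also have "\<dots> = (1 - 1 / real (Suc (Suc t))) * (Z / Z)"
      by (simp only: sum_distrib_left[symmetric] sum_divide_distrib[symmetric] Z_def)
    finally show ?thesis using Z_pos by (simp add: w_def flh_w_new_expert)
  qed
  ultimately show ?case using m w_def by simp
qed

definition flh_potential :: "real \<Rightarrow> (nat \<Rightarrow> nat \<Rightarrow> real) \<Rightarrow> (nat \<Rightarrow> real) \<Rightarrow> nat \<Rightarrow> nat \<Rightarrow> real" where
  "flh_potential \<zeta> E y p t = ln (flh_w \<zeta> E y t p) + ln (real t)"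

text \<open>Exp-concavity turns the multiplicative update into a bound on the mixture's loss; the factor
  \<open>t\<close> in the potential absorbs the \<open>1 - 1/(t+1)\<close> lost to the newly started expert.\<close>
lemma flh_regret_step:
  fixes \<zeta> :: real and S :: "real set"
  assumes "convex S" "0 < \<zeta>" "1 \<le> p" "p \<le> t"
    and small: "\<And>x. x \<in> S \<Longrightarrow> 2 * \<zeta> * (y t - x)\<^sup>2 \<le> 1"
    and experts: "\<And>j. j \<in> {1..t} \<Longrightarrow> E j t \<in> S"
  shows "(y t - flh_pred \<zeta> E y t)\<^sup>2 - (y t - E p t)\<^sup>2 \<le>
    (1 / \<zeta>) * (flh_potential \<zeta> E y p (Suc t) - flh_potential \<zeta> E y p t)"
proof -
  obtain t' where t': "t = Suc t'" using assms by (cases t) auto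
  define v where "v = flh_w \<zeta> E y t"
  define e where "e j = exp (- \<zeta> * (y t - E j t)\<^sup>2)" for j
  define Z where "Z = (\<Sum>j = 1..t. v j * e j)"
  have v_pos: "\<forall>i\<in>{1..t}. 0 < v i" and v_sum: "sum v {1..t} = 1"
    using flh_w_distribution[of t \<zeta> E y] assms unfolding v_def by auto
  have Z_pos: "0 < Z"
    unfolding Z_def by (rule sum_pos) (use v_pos e_def assms in auto)
  have update: "flh_w \<zeta> E y (Suc t) p = (real t / real (Suc t)) * (v p * e p / Z)"
    using flh_w_update[of p t' \<zeta> E y] assms unfolding v_def e_def Z_def t'
    by (auto simp: field_simps)
  have "Z \<le> exp (- \<zeta> * (y t - flh_pred \<zeta> E y t)\<^sup>2)"
    unfolding Z_def flh_pred_def e_def v_def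
    by (rule sum_exp_neg_sq_le[OF assms(1,2) small]) (use assms v_sum v_pos experts in \<open>auto simp: v_def less_imp_le\<close>)
  then have ln_Z: "ln Z \<le> - \<zeta> * (y t - flh_pred \<zeta> E y t)\<^sup>2"
    using Z_pos by (metis ln_exp ln_le_cancel_iff exp_gt_zero)
  have "0 < v p" using v_pos assms by auto
  then have "ln (flh_w \<zeta> E y (Suc t) p) + ln (real (Suc t)) - (ln (v p) + ln (real t))
      = - \<zeta> * (y t - E p t)\<^sup>2 - ln Z"
    using assms Z_pos by (simp add: update ln_mult ln_div e_def)
  with ln_Z \<open>0 < \<zeta>\<close> show ?thesis
    unfolding v_def flh_potential_def by (simp add: field_simps)
qed

lemma flh_potential_start:
  assumes "1 \<le> p"
  shows "flh_potential \<zeta> E y p p = 0"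
proof -
  have "0 < flh_w \<zeta> E y p p" using flh_w_distribution[of p \<zeta> E y] assms by auto
  then have "flh_potential \<zeta> E y p p = ln (flh_w \<zeta> E y p p * real p)"
    using assms by (simp add: flh_potential_def ln_mult)
  with flh_w_diag[OF assms] show ?thesis by simp
qed

lemma flh_potential_le: "1 \<le> p \<Longrightarrow> p \<le> t \<Longrightarrow> flh_potential \<zeta> E y p t \<le> ln (real t)"
proof -
  assume "1 \<le> p" "p \<le> t"
  have w: "\<forall>i\<in>{1..t}. 0 < flh_w \<zeta> E y t i" "sum (flh_w \<zeta> E y t) {1..t} = 1"
    using flh_w_distribution[of t \<zeta> E y] \<open>1 \<le> p\<close> \<open>p \<le> t\<close> by auto
  have "flh_w \<zeta> E y t p \<le> sum (flh_w \<zeta> E y t) {1..t}"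
    by (rule member_le_sum) (use w \<open>1 \<le> p\<close> \<open>p \<le> t\<close> in \<open>auto intro: less_imp_le\<close>)
  with w \<open>1 \<le> p\<close> \<open>p \<le> t\<close> show ?thesis by (simp add: flh_potential_def)
qed

lemma flh_regret_interval:
  fixes \<zeta> :: real and S :: "real set"
  assumes "convex S" "0 < \<zeta>" "1 \<le> p" "p \<le> q"
    and small: "\<And>t x. t \<in> {p..q} \<Longrightarrow> x \<in> S \<Longrightarrow> 2 * \<zeta> * (y t - x)\<^sup>2 \<le> 1"
    and experts: "\<And>t j. t \<in> {p..q} \<Longrightarrow> j \<in> {1..t} \<Longrightarrow> E j t \<in> S"
  shows "(\<Sum>t = p..q. (y t - flh_pred \<zeta> E y t)\<^sup>2 - (y t - E p t)\<^sup>2) \<le> (1 / \<zeta>) * ln (real (Suc q))"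
proof -
  have "(\<Sum>t = p..q. (y t - flh_pred \<zeta> E y t)\<^sup>2 - (y t - E p t)\<^sup>2)
      \<le> (\<Sum>t = p..q. (1 / \<zeta>) * (flh_potential \<zeta> E y p (Suc t) - flh_potential \<zeta> E y p t))"
    by (rule sum_mono, rule flh_regret_step[OF assms(1,2)]) (use assms in auto)
  also have "\<dots> = (1 / \<zeta>) * (flh_potential \<zeta> E y p (Suc q) - flh_potential \<zeta> E y p p)"
    using \<open>p \<le> q\<close> by (simp only: sum_distrib_left[symmetric] sum_Suc_diff le_SucI)
  also have "\<dots> = (1 / \<zeta>) * flh_potential \<zeta> E y p (Suc q)"
    using flh_potential_start[OF \<open>1 \<le> p\<close>] by simp
  also have "\<dots> \<le> (1 / \<zeta>) * ln (real (Suc q))"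
    using assms by (intro mult_left_mono flh_potential_le) auto
  finally show ?thesis .
qed

lemma proj_box_abs_le: "0 \<le> B \<Longrightarrow> \<bar>proj_box B x\<bar> \<le> B"
  by (simp add: proj_box_def)

lemma proj_box_nonexpansive: "\<bar>w\<bar> \<le> B \<Longrightarrow> \<bar>proj_box B x - w\<bar> \<le> \<bar>x - w\<bar>"
  unfolding proj_box_def by (cases "x \<le> - B"; cases "B \<le> x") (simp_all add: abs_le_iff)

lemma ogd_step_abs_le: "0 \<le> B \<Longrightarrow> \<bar>x0\<bar> \<le> B \<Longrightarrow> \<bar>ogd_step B x0 y p k\<bar> \<le> B"
  by (cases k) (simp_all add: Let_def proj_box_abs_le)

lemma ogd_step_Suc_eq:
  "ogd_step B x0 y p (Suc k) =
    proj_box B (ogd_step B x0 y p k - (ogd_step B x0 y p k - y (p + k)) / real (Suc k))"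
  unfolding ogd_step.simps Let_def by (rule arg_cong[where f = "proj_box B"]) (simp add: field_simps)

lemma gradient_step_identity:
  fixes k x y w :: real
  assumes "0 < k"
  shows "(y - x)\<^sup>2 - (y - w)\<^sup>2 + k * (x - (x - y) / k - w)\<^sup>2 = (k - 1) * (x - w)\<^sup>2 + (x - y)\<^sup>2 / k"
  using assms by (simp add: field_simps power2_eq_square)

text \<open>The weighted distance \<open>K (x\<^sub>K - w)\<^sup>2\<close> is the potential of the strongly convex OGD analysis;
  each step costs at most the squared gradient over \<open>K + 1\<close>, hence the harmonic number.\<close>
lemma ogd_regret_potential:
  fixes B G x0 w :: real
  assumes "0 \<le> B" "\<bar>x0\<bar> \<le> B" "\<bar>w\<bar> \<le> B"
    and y: "\<And>k. k < K \<Longrightarrow> \<bar>y (p + k)\<bar> \<le> G"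
  shows "(\<Sum>k<K. (y (p + k) - ogd_step B x0 y p k)\<^sup>2 - (y (p + k) - w)\<^sup>2)
           + real K * (ogd_step B x0 y p K - w)\<^sup>2 \<le> (G + B)\<^sup>2 * harm K"
  using y
proof (induction K)
  case 0
  then show ?case by (simp add: harm_altdef)
next
  case (Suc K)
  define x where "x = ogd_step B x0 y p K"
  define c where "c = x - (x - y (p + K)) / real (Suc K)"
  have "(proj_box B c - w)\<^sup>2 \<le> (c - w)\<^sup>2"
    using proj_box_nonexpansive[OF \<open>\<bar>w\<bar> \<le> B\<close>, of c] by (simp only: abs_le_square_iff)
  then have next_step: "real (Suc K) * (ogd_step B x0 y p (Suc K) - w)\<^sup>2 \<le> real (Suc K) * (c - w)\<^sup>2"
    unfolding ogd_step_Suc_eq x_def[symmetric] c_def[symmetric] by (rule mult_left_mono) simp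
  have "\<bar>x\<bar> \<le> B" "\<bar>y (p + K)\<bar> \<le> G"
    using ogd_step_abs_le[OF assms(1,2)] Suc.prems[of K] unfolding x_def by auto
  then have "\<bar>x - y (p + K)\<bar> \<le> \<bar>G + B\<bar>"
    by linarith
  then have gradient: "(x - y (p + K))\<^sup>2 \<le> (G + B)\<^sup>2"
    by (simp only: abs_le_square_iff)
  have step: "(y (p + K) - x)\<^sup>2 - (y (p + K) - w)\<^sup>2 + real (Suc K) * (c - w)\<^sup>2
      = real K * (x - w)\<^sup>2 + (x - y (p + K))\<^sup>2 / real (Suc K)"
    unfolding c_def by (subst gradient_step_identity) simp_all
  define regret where "regret K = (\<Sum>k<K. (y (p + k) - ogd_step B x0 y p k)\<^sup>2 - (y (p + k) - w)\<^sup>2)" for K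
  have IH: "regret K + real K * (x - w)\<^sup>2 \<le> (G + B)\<^sup>2 * harm K"
    using Suc by (simp add: x_def regret_def)
  have "regret (Suc K) + real (Suc K) * (ogd_step B x0 y p (Suc K) - w)\<^sup>2
      \<le> regret K + ((y (p + K) - x)\<^sup>2 - (y (p + K) - w)\<^sup>2) + real (Suc K) * (c - w)\<^sup>2"
    using next_step by (simp add: regret_def x_def)
  also have "\<dots> = regret K + real K * (x - w)\<^sup>2 + (x - y (p + K))\<^sup>2 / real (Suc K)"
    using step by simp
  also have "\<dots> \<le> (G + B)\<^sup>2 * harm K + (G + B)\<^sup>2 / real (Suc K)"
    using IH divide_right_mono[OF gradient, of "real (Suc K)"] by simp
  also have "\<dots> = (G + B)\<^sup>2 * harm (Suc K)"
    by (simp add: harm_Suc distrib_left divide_inverse)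
  finally show ?case unfolding regret_def .
qed

lemma ogd_regret_interval:
  fixes B G x0 w :: real
  assumes "0 \<le> B" "\<bar>x0\<bar> \<le> B" "\<bar>w\<bar> \<le> B" "p \<le> q"
    and y: "\<And>t. t \<in> {p..q} \<Longrightarrow> \<bar>y t\<bar> \<le> G"
  shows "(\<Sum>t = p..q. (y t - base_pred B x0 y p t)\<^sup>2 - (y t - w)\<^sup>2) \<le> (G + B)\<^sup>2 * harm (Suc (q - p))"
proof -
  have "(\<Sum>t = p..q. (y t - base_pred B x0 y p t)\<^sup>2 - (y t - w)\<^sup>2)
      = (\<Sum>k<Suc (q - p). (y (p + k) - ogd_step B x0 y p k)\<^sup>2 - (y (p + k) - w)\<^sup>2)"
    using \<open>p \<le> q\<close> by (simp add: sum.atLeastAtMost_shift_0 atLeast0AtMost lessThan_Suc_atMost base_pred_def)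
  also have "\<dots> \<le> (G + B)\<^sup>2 * harm (Suc (q - p))"
  proof -
    have "\<bar>y (p + k)\<bar> \<le> G" if "k < Suc (q - p)" for k
      using y that \<open>p \<le> q\<close> by simp
    note potential = ogd_regret_potential[where K = "Suc (q - p)" and y = y and p = p, OF assms(1-3) this]
    have "0 \<le> real (Suc (q - p)) * (ogd_step B x0 y p (Suc (q - p)) - w)\<^sup>2"
      by simp
    with potential show ?thesis by linarith
  qed
  finally show ?thesis .
qed

lemma harm_le_one_plus_ln: "0 < K \<Longrightarrow> harm K \<le> 1 + ln (real K)"
  using euler_mascheroni_sequence_decreasing[of 1 K] by (simp add: harm_expand)

lemma one_le_ln: "3 \<le> n \<Longrightarrow> 1 \<le> ln (real n)"
  using exp_le ln_le_cancel_iff[of "exp 1" "real n"] by simp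

lemma ln_Suc_le_twice_ln:
  assumes "2 \<le> n"
  shows "ln (real (Suc n)) \<le> 2 * ln (real n)"
proof -
  have "Suc n \<le> n * n"
    using mult_le_mono1[OF assms, of n] assms by linarith
  then have "real (Suc n) \<le> real n ^ 2"
    by (metis of_nat_le_iff of_nat_mult power2_eq_square)
  then have "ln (real (Suc n)) \<le> ln (real n ^ 2)"
    using assms by (subst ln_le_cancel_iff) auto
  with assms show ?thesis by (simp add: ln_realpow)
qed

lemma flh_ogd_regret_vs_base_learner:
  fixes B G x0 :: real
  assumes "3 \<le> n" "0 < B" "0 \<le> G" "\<bar>x0\<bar> \<le> B" "1 \<le> p" "p \<le> q" "q \<le> n"
    and y: "\<And>t. t \<in> {p..q} \<Longrightarrow> \<bar>y t\<bar> \<le> G"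
  shows "(\<Sum>t = p..q. (y t - flh_ogd_pred B G x0 y t)\<^sup>2 - (y t - base_pred B x0 y p t)\<^sup>2)
           \<le> 4 * (B + G)\<^sup>2 * ln (real n)"
proof -
  define \<zeta> where "\<zeta> = 1 / (2 * (G + B)\<^sup>2)"
  have "0 < G + B" "0 < \<zeta>" using assms by (simp_all add: \<zeta>_def)
  have small: "2 * \<zeta> * (y t - x)\<^sup>2 \<le> 1" if "t \<in> {p..q}" "x \<in> {-B..B}" for t x
  proof -
    have "\<bar>y t - x\<bar> \<le> \<bar>G + B\<bar>" using y[OF that(1)] that(2) by auto
    then have "(y t - x)\<^sup>2 \<le> (G + B)\<^sup>2" by (simp only: abs_le_square_iff)
    with \<open>0 < G + B\<close> show ?thesis by (simp add: \<zeta>_def field_simps)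
  qed
  have "\<bar>base_pred B x0 y j t\<bar> \<le> B" for j t
    using ogd_step_abs_le[of B x0] assms unfolding base_pred_def by simp
  then have experts: "base_pred B x0 y j t \<in> {-B..B}" for j t
    by (simp add: abs_le_iff minus_le_iff)
  have "ln (real (Suc q)) \<le> ln (real (Suc n))" using \<open>q \<le> n\<close> by simp
  also have "\<dots> \<le> 2 * ln (real n)" using ln_Suc_le_twice_ln \<open>3 \<le> n\<close> by simp
  finally have ln_q: "ln (real (Suc q)) \<le> 2 * ln (real n)" .
  have "(\<Sum>t = p..q. (y t - flh_pred \<zeta> (base_pred B x0 y) y t)\<^sup>2 - (y t - base_pred B x0 y p t)\<^sup>2)
      \<le> (1 / \<zeta>) * ln (real (Suc q))"
    by (rule flh_regret_interval[OF convex_real_interval(5) \<open>0 < \<zeta>\<close> \<open>1 \<le> p\<close> \<open>p \<le> q\<close> small experts])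
  also have "\<dots> \<le> 4 * (B + G)\<^sup>2 * ln (real n)"
    using mult_left_mono[OF ln_q, of "2 * (G + B)\<^sup>2"] by (simp add: \<zeta>_def add.commute)
  finally show ?thesis by (simp add: flh_ogd_pred_def \<zeta>_def)
qed

lemma base_learner_regret:
  fixes B G x0 w :: real
  assumes "3 \<le> n" "0 \<le> B" "\<bar>x0\<bar> \<le> B" "\<bar>w\<bar> \<le> B" "1 \<le> p" "p \<le> q" "q \<le> n"
    and y: "\<And>t. t \<in> {p..q} \<Longrightarrow> \<bar>y t\<bar> \<le> G"
  shows "(\<Sum>t = p..q. (y t - base_pred B x0 y p t)\<^sup>2 - (y t - w)\<^sup>2) \<le> 2 * (B + G)\<^sup>2 * ln (real n)"
proof -
  have "(\<Sum>t = p..q. (y t - base_pred B x0 y p t)\<^sup>2 - (y t - w)\<^sup>2) \<le> (G + B)\<^sup>2 * harm (Suc (q - p))"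
    by (rule ogd_regret_interval) (use assms in auto)
  also have "\<dots> \<le> (G + B)\<^sup>2 * (1 + ln (real (Suc (q - p))))"
    by (rule mult_left_mono[OF harm_le_one_plus_ln]) simp_all
  also have "\<dots> \<le> (G + B)\<^sup>2 * (2 * ln (real n))"
  proof (rule mult_left_mono)
    have "ln (real (Suc (q - p))) \<le> ln (real n)" using assms by simp
    with one_le_ln[OF \<open>3 \<le> n\<close>] show "1 + ln (real (Suc (q - p))) \<le> 2 * ln (real n)" by linarith
  qed simp
  finally show ?thesis by (simp add: add.commute)
qed

lemma flh_ogd_regret_const:
  fixes B G x0 w :: real
  assumes "3 \<le> n" "0 < B" "0 \<le> G" "\<bar>x0\<bar> \<le> B" "\<bar>w\<bar> \<le> B" "1 \<le> p" "q \<le> n"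
    and y: "\<And>t. t \<in> {p..q} \<Longrightarrow> \<bar>y t\<bar> \<le> G"
  shows "(\<Sum>t = p..q. (y t - flh_ogd_pred B G x0 y t)\<^sup>2 - (y t - w)\<^sup>2) \<le> 6 * (B + G)\<^sup>2 * ln (real n)"
proof (cases "p \<le> q")
  case False
  then show ?thesis using one_le_ln[OF \<open>3 \<le> n\<close>] by simp
next
  case True
  have "(\<Sum>t = p..q. (y t - flh_ogd_pred B G x0 y t)\<^sup>2 - (y t - w)\<^sup>2)
      = (\<Sum>t = p..q. (y t - flh_ogd_pred B G x0 y t)\<^sup>2 - (y t - base_pred B x0 y p t)\<^sup>2)
        + (\<Sum>t = p..q. (y t - base_pred B x0 y p t)\<^sup>2 - (y t - w)\<^sup>2)"
    by (simp flip: sum.distrib)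
  moreover have "(\<Sum>t = p..q. (y t - flh_ogd_pred B G x0 y t)\<^sup>2 - (y t - base_pred B x0 y p t)\<^sup>2)
      \<le> 4 * (B + G)\<^sup>2 * ln (real n)"
    by (rule flh_ogd_regret_vs_base_learner) (use assms True in auto)
  moreover have "(\<Sum>t = p..q. (y t - base_pred B x0 y p t)\<^sup>2 - (y t - w)\<^sup>2) \<le> 2 * (B + G)\<^sup>2 * ln (real n)"
    by (rule base_learner_regret) (use assms True in auto)
  ultimately show ?thesis by linarith
qed

lemma sum_split_at:
  fixes f :: "nat \<Rightarrow> 'a::comm_monoid_add"
  assumes "a \<le> Suc m" "m \<le> b"
  shows "sum f {a..b} = sum f {a..m} + sum f {Suc m..b}"
proof -
  have "{a..b} = {a..m} \<union> {Suc m..b}" using assms by auto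
  then show ?thesis by (simp add: sum.union_disjoint)
qed

lemma sum_by_parts:
  fixes v r :: "nat \<Rightarrow> 'a::comm_ring"
  assumes "Suc c \<le> d"
  shows "(\<Sum>t = Suc c..d. v t * (r t - r (t - 1)))
           = v d * r d - v (Suc c) * r c - (\<Sum>t = Suc c..<d. r t * (v (Suc t) - v t))"
  using assms
proof (induction d rule: dec_induct)
  case base
  then show ?case by (simp add: algebra_simps)
next
  case (step d)
  then show ?case by (simp add: algebra_simps)
qed

lemma abs_diff_le_tv:
  assumes "a \<le> i" "i \<le> j" "j \<le> b"
  shows "\<bar>u j - u i\<bar> \<le> tv u a b"
proof -
  have "\<bar>u j - u i\<bar> \<le> (\<Sum>k = Suc i..j. \<bar>u k - u (k - 1)\<bar>)"
    using \<open>i \<le> j\<close>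
  proof (induction j rule: dec_induct)
    case base
    then show ?case by simp
  next
    case (step m)
    have "\<bar>u (Suc m) - u i\<bar> \<le> \<bar>u (Suc m) - u m\<bar> + \<bar>u m - u i\<bar>"
      using abs_triangle_ineq[of "u (Suc m) - u m" "u m - u i"] by simp
    with step show ?case by simp
  qed
  also have "\<dots> \<le> tv u a b"
    unfolding tv_def by (rule sum_mono2) (use assms in auto)
  finally show ?thesis .
qed

lemma sum_sq_dev_le_of_tv_bound:
  assumes "a \<le> c" "d \<le> b" and tv_bound: "tv u a b \<le> B / sqrt (real (b - a + 1))"
  shows "(\<Sum>t = c..d. (u t - u c)\<^sup>2) \<le> B\<^sup>2"
proof -
  have "0 \<le> tv u a b" unfolding tv_def by (simp add: sum_nonneg)
  with tv_bound have "0 \<le> B / sqrt (real (b - a + 1))" by linarith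
  then have "0 \<le> B" by (simp add: zero_le_divide_iff)
  have "(u t - u c)\<^sup>2 \<le> B\<^sup>2 / real (b - a + 1)" if "t \<in> {c..d}" for t
  proof -
    have "\<bar>u t - u c\<bar> \<le> B / sqrt (real (b - a + 1))"
      using abs_diff_le_tv[of a c t b u] tv_bound that assms by auto
    then have "(u t - u c)\<^sup>2 \<le> (B / sqrt (real (b - a + 1)))\<^sup>2"
      by (metis abs_ge_zero power2_abs power_mono)
    then show ?thesis by (simp add: power_divide)
  qed
  then have "(\<Sum>t = c..d. (u t - u c)\<^sup>2) \<le> real (card {c..d}) * (B\<^sup>2 / real (b - a + 1))"
    by (rule sum_bounded_above)
  also have "\<dots> \<le> real (b - a + 1) * (B\<^sup>2 / real (b - a + 1))"
    using assms by (intro mult_right_mono) auto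
  finally show ?thesis by simp
qed

text \<open>Summation by parts makes the cross term \<open>\<Sum> (u t - u (c + 1)) (y t - u t)\<close> vanish.\<close>
lemma kkt_interior_gap:
  fixes u y s :: "nat \<Rightarrow> real" and lam \<sigma> :: real
  assumes stationary: "\<And>t. t \<in> {Suc c..d} \<Longrightarrow> u t - y t = lam * (s t - s (t - 1))"
    and "s c = \<sigma>" "s d = \<sigma>"
    and sign: "\<And>t. t \<in> {Suc c..<d} \<Longrightarrow> u (Suc t) \<noteq> u t \<Longrightarrow> s t = \<sigma>"
  shows "(\<Sum>t = Suc c..d. (y t - u (Suc c))\<^sup>2 - (y t - u t)\<^sup>2) = (\<Sum>t = Suc c..d. (u t - u (Suc c))\<^sup>2)"
proof (cases "Suc c \<le> d")
  case False
  then show ?thesis by simp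
next
  case True
  define v where "v t = u t - u (Suc c)" for t
  define r where "r t = s t - \<sigma>" for t
  have summand: "(y t - u (Suc c))\<^sup>2 - (y t - u t)\<^sup>2 = (v t)\<^sup>2 - 2 * lam * (v t * (r t - r (t - 1)))"
    if "t \<in> {Suc c..d}" for t
  proof -
    have y_t: "y t = u t - lam * (r t - r (t - 1))" using stationary[OF that] by (simp add: r_def)
    show ?thesis unfolding y_t v_def by (simp add: power2_eq_square algebra_simps)
  qed
  have "(\<Sum>t = Suc c..<d. r t * (v (Suc t) - v t)) = 0"
    using sign by (intro sum.neutral) (auto simp: r_def v_def)
  then have cross: "(\<Sum>t = Suc c..d. v t * (r t - r (t - 1))) = 0"
    using sum_by_parts[OF True, of v r] \<open>s c = \<sigma>\<close> \<open>s d = \<sigma>\<close> by (simp add: r_def)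
  have "(\<Sum>t = Suc c..d. (y t - u (Suc c))\<^sup>2 - (y t - u t)\<^sup>2)
      = (\<Sum>t = Suc c..d. (v t)\<^sup>2) - 2 * lam * (\<Sum>t = Suc c..d. v t * (r t - r (t - 1)))"
    by (simp add: summand sum_subtractf sum_distrib_left)
  with cross show ?thesis by (simp add: v_def)
qed

lemma sum_const_run:
  assumes const: "\<And>t. t \<in> {c..<d} \<Longrightarrow> u (Suc t) = u t"
  shows "(\<Sum>t = c..d. f t (u t)) = (\<Sum>t = c..d. f t (u c))"
proof (rule sum.cong)
  fix t
  assume "t \<in> {c..d}"
  then have "c \<le> t" "t \<le> d" by auto
  then have "u t = u c"
    by (induction t rule: dec_induct) (use const in auto)
  then show "f t (u t) = f t (u c)" by simp
qed simp

lemma incr_strictly_between_changes: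
  fixes u :: "nat \<Rightarrow> 'a::linorder"
  assumes incr: "\<And>t. t \<in> {a..<b} \<Longrightarrow> u t \<le> u (Suc t)"
    and "a \<le> t1" "t1 < t" "t \<le> t2" "t2 < b" "u (Suc t1) \<noteq> u t1" "u (Suc t2) \<noteq> u t2"
  shows "u t1 < u t \<and> u t < u (Suc t2)"
proof -
  have "u t1 < u (Suc t1)" "u t2 < u (Suc t2)"
    using incr[of t1] incr[of t2] assms by (auto simp: order.strict_iff_order)
  moreover have "u (Suc t1) \<le> u t" "u t \<le> u t2"
    by (rule lift_Suc_mono_le_ivl[where N = "{a..<b}" and f = u, OF incr]; use assms in auto)+
  ultimately show ?thesis by (metis order.strict_trans1 order.strict_trans2)
qed

lemma monotone_on_bin_strictly_between_changes:
  fixes u :: "nat \<Rightarrow> real"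
  assumes "monotone_on_bin u a b"
    and "a \<le> t1" "t1 < t" "t \<le> t2" "t2 < b" "u (Suc t1) \<noteq> u t1" "u (Suc t2) \<noteq> u t2"
  shows "min (u t1) (u (Suc t2)) < u t \<and> u t < max (u t1) (u (Suc t2))"
proof -
  from assms(1) consider "\<forall>t\<in>{a..<b}. u t \<le> u (Suc t)" | "\<forall>t\<in>{a..<b}. - u t \<le> - u (Suc t)"
    unfolding monotone_on_bin_def by auto
  then show ?thesis
  proof cases
    case 1
    then show ?thesis using incr_strictly_between_changes[of a b u t1 t t2] assms by auto
  next
    case 2
    then show ?thesis using incr_strictly_between_changes[of a b "\<lambda>t. - u t" t1 t t2] assms by auto
  qed
qed

lemma monotone_on_bin_sgn:
  fixes u :: "nat \<Rightarrow> real"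
  assumes "monotone_on_bin u a b"
  obtains \<sigma> where "\<And>t. t \<in> {a..<b} \<Longrightarrow> u (Suc t) \<noteq> u t \<Longrightarrow> sgn (u (Suc t) - u t) = \<sigma>"
proof -
  from assms consider "\<forall>t\<in>{a..<b}. u t \<le> u (Suc t)" | "\<forall>t\<in>{a..<b}. u (Suc t) \<le> u t"
    unfolding monotone_on_bin_def by auto
  then show ?thesis
  proof cases
    case 1
    then show ?thesis by (intro that[of 1]) (force simp: sgn_if)
  next
    case 2
    then show ?thesis by (intro that[of "-1"]) (force simp: sgn_if)
  qed
qed

lemma key_partition_memD:
  assumes "(a, b) \<in> key_partition n B u" "0 \<le> B"
  shows "1 \<le> a" "a \<le> b" "b \<le> n" "tv u a b \<le> B / sqrt (real (b - a + 1))"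
proof -
  obtain k where a: "a = bin_start n B u k" "a \<le> n" and b: "b = bin_end n B u a"
    using assms(1) unfolding key_partition_def by auto
  show "1 \<le> a" unfolding a by (cases k) auto
  define P where "P c \<longleftrightarrow> a \<le> c \<and> c \<le> n \<and> tv u a c \<le> B / sqrt (real (c - a + 1))" for c
  have "P a" using a \<open>0 \<le> B\<close> by (simp add: P_def tv_def)
  then have "P (Greatest P)" by (rule GreatestI_nat[where b = n]) (simp add: P_def)
  moreover have "b = Greatest P" unfolding b bin_end_def P_def ..
  ultimately have "P b" by simp
  then show "a \<le> b" "b \<le> n" "tv u a b \<le> B / sqrt (real (b - a + 1))"
    unfolding P_def by blast+
qed

lemma kkt_monotone_bin_gap:
  assumes kkt: "kkt_holds n B Cn y u" and box: "\<And>t. t \<in> {1..n} \<Longrightarrow> \<bar>u t\<bar> \<le> B"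
    and mono: "monotone_on_bin u a b"
    and "1 \<le> a" "a \<le> t1" "t1 \<le> t2" "t2 < b" "b \<le> n" "u (Suc t1) \<noteq> u t1" "u (Suc t2) \<noteq> u t2"
  shows "(\<Sum>t = Suc t1..t2. (y t - u (Suc t1))\<^sup>2 - (y t - u t)\<^sup>2) = (\<Sum>t = Suc t1..t2. (u t - u (Suc t1))\<^sup>2)"
proof -
  obtain lam gm gp s where
    sign_s: "\<forall>t\<in>{1..<n}. u (t + 1) \<noteq> u t \<longrightarrow> s t = sgn (u (t + 1) - u t)"
    and stationary: "\<forall>t\<in>{1..n}. u t - y t = lam * (s t - s (t - 1)) + gm t - gp t"
    and slack: "\<forall>t\<in>{1..n}. gm t * (u t + B) = 0 \<and> gp t * (u t - B) = 0"
    using kkt unfolding kkt_holds_def by blast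
  obtain \<sigma> where \<sigma>: "\<And>t. t \<in> {a..<b} \<Longrightarrow> u (Suc t) \<noteq> u t \<Longrightarrow> sgn (u (Suc t) - u t) = \<sigma>"
    using monotone_on_bin_sgn[OF mono] by blast
  have sign: "s t = \<sigma>" if "t \<in> {t1..t2}" "u (Suc t) \<noteq> u t" for t
    using sign_s \<sigma>[of t] that assms by auto
  have "u t - y t = lam * (s t - s (t - 1))" if t: "t \<in> {Suc t1..t2}" for t
  proof -
    have "\<bar>u t1\<bar> \<le> B" "\<bar>u (Suc t2)\<bar> \<le> B" using box assms by auto
    moreover have "min (u t1) (u (Suc t2)) < u t \<and> u t < max (u t1) (u (Suc t2))"
      using monotone_on_bin_strictly_between_changes[OF mono] t assms by auto
    ultimately have "u t + B \<noteq> 0" "u t - B \<noteq> 0" by auto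
    moreover have "t \<in> {1..n}" using t assms by auto
    ultimately have "gm t = 0" "gp t = 0" using slack by auto
    with stationary \<open>t \<in> {1..n}\<close> show ?thesis by auto
  qed
  then show ?thesis
    by (rule kkt_interior_gap) (use sign assms in auto)
qed

lemma first_last_change:
  assumes "\<exists>t\<in>{a..<b}. u (Suc t) \<noteq> u t"
  obtains t1 t2 where "a \<le> t1" "t1 \<le> t2" "t2 < b" "u (Suc t1) \<noteq> u t1" "u (Suc t2) \<noteq> u t2"
    and "\<And>t. t \<in> {a..<t1} \<union> {Suc t2..<b} \<Longrightarrow> u (Suc t) = u t"
proof -
  define J where "J = {t \<in> {a..<b}. u (Suc t) \<noteq> u t}"
  have "finite J" "J \<noteq> {}" using assms by (auto simp: J_def)
  then have "Min J \<in> J" "Max J \<in> J" and J_bounds: "\<And>t. t \<in> J \<Longrightarrow> Min J \<le> t \<and> t \<le> Max J"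
    by simp_all
  show ?thesis
  proof (rule that[of "Min J" "Max J"])
    show "a \<le> Min J" "Min J \<le> Max J" "Max J < b" "u (Suc (Min J)) \<noteq> u (Min J)" "u (Suc (Max J)) \<noteq> u (Max J)"
      using \<open>Min J \<in> J\<close> \<open>Max J \<in> J\<close> J_bounds by (auto simp: J_def)
    show "u (Suc t) = u t" if "t \<in> {a..<Min J} \<union> {Suc (Max J)..<b}" for t
    proof (rule ccontr)
      assume "u (Suc t) \<noteq> u t"
      with that \<open>Min J \<in> J\<close> \<open>Max J \<in> J\<close> have "t \<in> J" by (auto simp: J_def)
      with J_bounds[of t] that show False by auto
    qed
  qed
qed

lemma regret_on_monotone_bin:
  fixes X :: "nat \<Rightarrow> real" and R B :: real
  assumes regret_const: "\<And>p q w. 1 \<le> p \<Longrightarrow> q \<le> n \<Longrightarrow> \<bar>w\<bar> \<le> B \<Longrightarrow>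
      (\<Sum>t = p..q. (y t - X t)\<^sup>2 - (y t - w)\<^sup>2) \<le> R"
    and "0 \<le> B" and kkt: "kkt_holds n B Cn y u" and box: "\<And>t. t \<in> {1..n} \<Longrightarrow> \<bar>u t\<bar> \<le> B"
    and bin: "(a, b) \<in> key_partition n B u" and mono: "monotone_on_bin u a b"
  shows "(\<Sum>t = a..b. (y t - X t)\<^sup>2 - (y t - u t)\<^sup>2) \<le> 3 * R + B\<^sup>2"
proof -
  note ab = key_partition_memD[OF bin \<open>0 \<le> B\<close>]
  define L where "L t = (y t - X t)\<^sup>2 - (y t - u t)\<^sup>2" for t
  have "0 \<le> R" using regret_const[of 1 0 0] \<open>0 \<le> B\<close> by simp
  have const_regret: "(\<Sum>t = c..d. L t) \<le> R" if "a \<le> c" "d \<le> b" "\<And>t. t \<in> {c..<d} \<Longrightarrow> u (Suc t) = u t" for c d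
  proof (cases "c \<le> d")
    case True
    have "(\<Sum>t = c..d. L t) = (\<Sum>t = c..d. (y t - X t)\<^sup>2 - (y t - u c)\<^sup>2)"
      using sum_const_run[where f = "\<lambda>t v. (y t - X t)\<^sup>2 - (y t - v)\<^sup>2" and u = u and c = c and d = d,
        OF that(3)]
      by (simp add: L_def)
    also have "\<dots> \<le> R"
      using regret_const box ab that True by simp
    finally show ?thesis .
  qed (use \<open>0 \<le> R\<close> in simp)
  show ?thesis
  proof (cases "\<exists>t\<in>{a..<b}. u (Suc t) \<noteq> u t")
    case False
    have "sum L {a..b} \<le> R" by (rule const_regret) (use False in auto)
    with \<open>0 \<le> R\<close> zero_le_power2[of B] show ?thesis unfolding L_def by linarith
  next
    case True
    obtain t1 t2 where t12: "a \<le> t1" "t1 \<le> t2" "t2 < b" "u (Suc t1) \<noteq> u t1" "u (Suc t2) \<noteq> u t2"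
      and no_change: "\<And>t. t \<in> {a..<t1} \<union> {Suc t2..<b} \<Longrightarrow> u (Suc t) = u t"
      by (fact first_last_change[OF True])
    have first: "sum L {a..t1} \<le> R"
      by (rule const_regret) (use t12 no_change in auto)
    have last: "sum L {Suc t2..b} \<le> R"
      by (rule const_regret) (use t12 no_change in auto)
    have "(\<Sum>t = Suc t1..t2. (y t - u (Suc t1))\<^sup>2 - (y t - u t)\<^sup>2) = (\<Sum>t = Suc t1..t2. (u t - u (Suc t1))\<^sup>2)"
      by (rule kkt_monotone_bin_gap[OF kkt box mono]) (use ab t12 in auto)
    also have "\<dots> \<le> B\<^sup>2"
      using sum_sq_dev_le_of_tv_bound[OF _ _ ab(4), of "Suc t1" t2] t12 by simp
    finally have gap: "(\<Sum>t = Suc t1..t2. (y t - u (Suc t1))\<^sup>2 - (y t - u t)\<^sup>2) \<le> B\<^sup>2" .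
    have "(\<Sum>t = Suc t1..t2. (y t - X t)\<^sup>2 - (y t - u (Suc t1))\<^sup>2) \<le> R"
      using regret_const box ab t12 by simp
    moreover have "sum L {Suc t1..t2} = (\<Sum>t = Suc t1..t2. (y t - X t)\<^sup>2 - (y t - u (Suc t1))\<^sup>2)
        + (\<Sum>t = Suc t1..t2. (y t - u (Suc t1))\<^sup>2 - (y t - u t)\<^sup>2)"
      by (simp add: L_def flip: sum.distrib)
    ultimately have "sum L {Suc t1..t2} \<le> R + B\<^sup>2" using gap by linarith
    moreover have "sum L {a..b} = sum L {a..t1} + sum L {Suc t1..t2} + sum L {Suc t2..b}"
      using sum_split_at[of a t1 b L] sum_split_at[of "Suc t1" t2 b L] t12 by simp
    ultimately show ?thesis using first last by (simp add: L_def)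
  qed
qed

theorem lemma4:
  fixes n :: nat and B G Cn x0 :: real and y u :: "nat \<Rightarrow> real" and i_s i_t :: nat
  assumes "n \<ge> 3" and "B \<ge> 1" and "G \<ge> B"
    and "\<forall>t\<in>{1..n}. \<bar>y t\<bar> \<le> G"
    and "\<bar>x0\<bar> \<le> B"
    and "Cn > 0"
    and "offline_optimal n B Cn y u"
    and "kkt_holds n B Cn y u"
    and "(i_s, i_t) \<in> key_partition n B u"
    and "monotone_on_bin u i_s i_t"
  shows "(\<Sum>t = i_s..i_t. (y t - flh_ogd_pred B G x0 y t)\<^sup>2 - (y t - u t)\<^sup>2)
           \<le> 31 * (B + G)\<^sup>2 * ln (real n)"
proof -
  have box: "\<bar>u t\<bar> \<le> B" if "t \<in> {1..n}" for t
  proof -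
    have "offline_feasible n B Cn u" using assms(7) unfolding offline_optimal_def by blast
    with that show ?thesis unfolding offline_feasible_def by (simp add: abs_le_iff minus_le_iff)
  qed
  have ln_n: "1 \<le> ln (real n)" by (rule one_le_ln[OF assms(1)])
  have B_sq: "B\<^sup>2 \<le> (B + G)\<^sup>2 * ln (real n)"
  proof -
    have "B\<^sup>2 \<le> (B + G)\<^sup>2" using assms by (intro power_mono) auto
    also have "\<dots> \<le> (B + G)\<^sup>2 * ln (real n)"
      using mult_left_mono[OF ln_n, of "(B + G)\<^sup>2"] by simp
    finally show ?thesis .
  qed
  have "(\<Sum>t = i_s..i_t. (y t - flh_ogd_pred B G x0 y t)\<^sup>2 - (y t - u t)\<^sup>2)
      \<le> 3 * (6 * (B + G)\<^sup>2 * ln (real n)) + B\<^sup>2"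
    by (rule regret_on_monotone_bin[OF flh_ogd_regret_const _ assms(8) box assms(9,10)])
      (use assms in auto)
  also have "\<dots> \<le> 31 * (B + G)\<^sup>2 * ln (real n)"
  proof -
    define X where "X = (B + G)\<^sup>2 * ln (real n)"
    have "0 \<le> X" "B\<^sup>2 \<le> X" using B_sq ln_n by (simp_all add: X_def)
    then have "3 * (6 * X) + B\<^sup>2 \<le> 31 * X" by linarith
    then show ?thesis by (simp add: X_def mult.assoc)
  qed
  finally show ?thesis .
qed

end
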